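(* Assume the standing setting below and run the DMFW algorithm with $\gamma_k=\frac{2}{k+1}$ and $\eta_k=\frac{2}{k+2}$. Then for every $i\in\mathcal N$ and $k\ge1$, $$\mathbb E\|y_k^i\|^2\le\hat\psi.$$
   Context: Setting. There are $n$ agents $\mathcal N=\{1,\dots,n\}$ connected by a connected graph $\mathcal G=(\mathcal N,\mathcal E)$ with weight matrix $C=[c_{ij}]\in\mathbb R^{n\times n}$, where $c_{ij}\ge 0$ and $c_{ij}=0$ whenever $j\ne i$ and $(i,j)\notin\mathcal E$. $C$ is doubly stochastic, i.e. all row sums and all column sums equal $1$. Let $\lambda$ be the second largest eigenvalue of $C$ in magnitude. It is assumed that $|\lambda|<1$ and that for all vectors $x^1,\dots,x^n\in\mathbb R^p$, with $\bar x=\frac1n\sum_i x^i$ and $\hat x^i=\sum_j c_{ij}x^j$, one has $\big(\sum_i\|\hat x^i-\bar x\|^2\big)^{1/2}\le|\lambda|\big(\sum_i\|x^i-\bar x\|^2\big)^{1/2}$. Let $k_0$ be the smallest positive integer with $|\lambda|\le (k_0/(k_0+1))^2$. Problem data. $\mathcal X\subset\mathbb R^p$ is convex and compact with diameter $D$, i.e. $\|x-x'\|\le D$ for all $x,x'\in\mathcal X$. For each $i$, $\xi^i$ is a random variable. The function $f_i(\cdot,\xi)$ is differentiable with $L$-Lipschitz gradient for every $\xi$. $F_i(x)=\mathbb E[f_i(x,\xi^i)]$ is differentiable with $\nabla F_i(x)=\mathbb E[\nabla f_i(x,\xi^i)]$ and $L$-Lipschitz gradient. For all $x\in\mathcal X$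 and $i$, $\mathbb E\|\nabla F_i(x)-\nabla f_i(x,\xi^i)\|^2\le\delta^2$. Set $F=\frac1n\sum_{i=1}^nF_i$. $G>0$ is a constant with $\mathbb E\|\nabla f_i(x,\xi^i)\|^2\le G^2$ and $\mathbb E\|\nabla f_i(x,\xi^i)\|\le G$ for all $x\in\mathcal X$ and $i\in\mathcal N$. DMFW algorithm. Fix step sizes $\gamma_k,\eta_k\in(0,1]$ and deterministic initial points $x_1^i\in\mathcal X$. The samples $\xi_k^i$ ($k\ge1$, $i\in\mathcal N$) are mutually independent, and $\xi_k^i$ has the distribution of $\xi^i$. For $k=1,2,\dots$ and each $i$: - $\hat x_k^i=\sum_{j=1}^n c_{ij}x_k^j$. - For $k=1$: $y_1^i=s_1^i=\nabla f_i(\hat x_1^i,\xi_1^i)$. For $k\ge2$: $y_k^i=(1-\gamma_k)y_{k-1}^i+\nabla f_i(\hat x_k^i,\xi_k^i)-(1-\gamma_k)\nabla f_i(\hat x_{k-1}^i,\xi_k^i)$ and $s_k^i=\sum_j c_{ij}s_{k-1}^j+y_k^i-y_{k-1}^i$. - $p_k^i=\sum_j c_{ij}s_k^j$. - $\theta_k^i\in\arg\min_{\phi\in\mathcal X}\langle p_k^i,\phi\rangle$. - $x_{k+1}^i=\hat x_k^i+\eta_k(\theta_k^i-\hat x_k^i)$. Constants: - $C_1=k_0\sqrt n D$. - $\psi=\max\{\max_i\mathbb E\|y_1^i\|,\ 2G+2L(D+2C_1)\}$. - $\hat\psi=\max\{\max_i\mathbb E\|y_1^i\|^2,\ 4L(D+2C_1)\psi+4G\psi+8G^2+8L^2(D+2C_1)^2\}$.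 *)

theory Defs
  imports "HOL-Analysis.Analysis" "HOL-Probability.Probability"
    "HOL-Computational_Algebra.Polynomial"
begin

definition charpoly_c :: "real^'n^'n \<Rightarrow> complex poly" where
  "charpoly_c A = det (\<chi> i j. (if i = j then [:0, 1:] else 0) - [:complex_of_real (A $ i $ j):])"

definition eig_mags_desc :: "real^'n^'n \<Rightarrow> real list" where
  "eig_mags_desc A = rev (sorted_list_of_multiset (image_mset norm (proots (charpoly_c A))))"

definition second_eig_mag :: "real^'n^'n \<Rightarrow> real" where
  "second_eig_mag A = eig_mags_desc A ! 1"

definition mix :: "real^'n^'n \<Rightarrow> ('n::finite \<Rightarrow> 'a::real_vector) \<Rightarrow> ('n \<Rightarrow> 'a)" where
  "mix C v = (\<lambda>i. \<Sum>j\<in>UNIV. (C $ i $ j) *\<^sub>R v j)"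

text \<open>DMFW iteration (for one fixed outcome of the samples).
  dmfw ... k = (x_k, y_k, s_k, x_{k+1}) for k \<ge> 1; the value at k = 0 is an unused dummy.
  g i x \<xi> is the gradient of f_i(\<cdot>,\<xi>) at x; lmo k i p is the chosen minimiser \<theta>_k^i
  of \<langle>p,\<phi>\<rangle> over \<phi> \<in> X; \<xi> k i is the sample \<xi>_k^i.\<close>
fun dmfw :: "real^'n^'n \<Rightarrow> ('n::finite \<Rightarrow> 'a::euclidean_space \<Rightarrow> 'b \<Rightarrow> 'a)
    \<Rightarrow> (nat \<Rightarrow> 'n \<Rightarrow> 'a \<Rightarrow> 'a) \<Rightarrow> (nat \<Rightarrow> real) \<Rightarrow> (nat \<Rightarrow> real) \<Rightarrow> ('n \<Rightarrow> 'a)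
    \<Rightarrow> (nat \<Rightarrow> 'n \<Rightarrow> 'b) \<Rightarrow> nat \<Rightarrow> ('n \<Rightarrow> 'a) \<times> ('n \<Rightarrow> 'a) \<times> ('n \<Rightarrow> 'a) \<times> ('n \<Rightarrow> 'a)" where
  "dmfw C g lmo \<gamma> \<eta> x1 \<xi> 0 = (x1, (\<lambda>_. 0), (\<lambda>_. 0), x1)"
| "dmfw C g lmo \<gamma> \<eta> x1 \<xi> (Suc 0) =
    (let xh = mix C x1;
         y = (\<lambda>i. g i (xh i) (\<xi> 1 i));
         s = y;
         p = mix C s;
         x' = (\<lambda>i. xh i + \<eta> 1 *\<^sub>R (lmo 1 i (p i) - xh i))
     in (x1, y, s, x'))"
| "dmfw C g lmo \<gamma> \<eta> x1 \<xi> (Suc (Suc k)) =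
    (case dmfw C g lmo \<gamma> \<eta> x1 \<xi> (Suc k) of (xo, yo, so, xk) \<Rightarrow>
      let m = Suc (Suc k);
          xh = mix C xk;
          xho = mix C xo;
          y = (\<lambda>i. (1 - \<gamma> m) *\<^sub>R yo i + g i (xh i) (\<xi> m i) - (1 - \<gamma> m) *\<^sub>R g i (xho i) (\<xi> m i));
          s = (\<lambda>i. mix C so i + y i - yo i);
          p = mix C s;
          x' = (\<lambda>i. xh i + \<eta> m *\<^sub>R (lmo m i (p i) - xh i))
      in (xk, y, s, x'))"

definition dmfw_y where
  "dmfw_y C g lmo \<gamma> \<eta> x1 \<xi> k i = fst (snd (dmfw C g lmo \<gamma> \<eta> x1 \<xi> k)) i"

end

theory Submission
  imports Defs
begin

text \<open>
  The bound holds along every sample path before expectations are taken. With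
  eta_k = 2/(k+2), the mixing contraction rho = (k0/(k0+1))^2 satisfies rho (k0+2) <= k0,
  which is exactly what keeps the consensus error of the mixed iterates below C1/k
  despite the perturbation of size eta_k D of each Frank-Wolfe step. Hence consecutive
  mixed iterates drift by at most about (C1 + D)/k, and since gamma_(k+1) = eta_k the
  Lipschitz gradients make |y_k^i| dominated by the eta-weighted running average of
  |grad f_i(x_1^i, xi_j^i)| + L (2 D + C1). Convexity of t^2 bounds the second moment
  of that average by 2 G^2 + 2 L^2 (2 D + C1)^2, which is below psi-hat. Only the laws
  of the samples enter: independence is used just for their measurability.
\<close>

section \<open>Consensus error\<close>

definition avg :: "('n::finite \<Rightarrow> 'a::real_vector) \<Rightarrow> 'a" where
  "avg v = (1 / real CARD('n)) *\<^sub>R (\<Sum>j\<in>UNIV. v j)"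

definition consensus_err :: "('n::finite \<Rightarrow> 'a::real_normed_vector) \<Rightarrow> real" where
  "consensus_err v = L2_set (\<lambda>i. norm (v i - avg v)) UNIV"

lemma avg_linear: "avg (\<lambda>i. a *\<^sub>R u i + b *\<^sub>R w i) = a *\<^sub>R avg u + b *\<^sub>R avg w"
  by (simp add: avg_def sum.distrib scaleR_sum_right[symmetric] algebra_simps)

lemma avg_mix:
  fixes C :: "real^'n::finite^'n"
  assumes "\<And>j. (\<Sum>i\<in>UNIV. C $ i $ j) = 1"
  shows "avg (mix C v) = avg v"
proof -
  have "(\<Sum>i\<in>UNIV. mix C v i) = (\<Sum>j\<in>UNIV. \<Sum>i\<in>UNIV. (C $ i $ j) *\<^sub>R v j)"
    unfolding mix_def by (rule sum.swap)
  also have "\<dots> = (\<Sum>j\<in>UNIV. v j)" using assms by (simp add: scaleR_sum_left[symmetric])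
  finally show ?thesis by (simp add: avg_def)
qed

lemma mix_in_convex:
  fixes C :: "real^'n::finite^'n"
  assumes "convex X" "\<And>i j. 0 \<le> C $ i $ j" "\<And>i. (\<Sum>j\<in>UNIV. C $ i $ j) = 1" "\<And>j. v j \<in> X"
  shows "mix C v i \<in> X"
  unfolding mix_def using assms by (intro convex_sum) auto

lemma avg_in_convex:
  fixes v :: "'n::finite \<Rightarrow> 'a::real_vector"
  assumes "convex X" "\<And>j. v j \<in> X"
  shows "avg v \<in> X"
proof -
  have "avg v = (\<Sum>j\<in>UNIV. (1 / real CARD('n)) *\<^sub>R v j)" by (simp add: avg_def scaleR_sum_right)
  also have "\<dots> \<in> X" using assms by (intro convex_sum) auto
  finally show ?thesis .
qed

lemma norm_le_consensus_err: "norm (v i - avg v) \<le> consensus_err v"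
  unfolding consensus_err_def by (rule member_le_L2_set) auto

lemma consensus_err_le_diameter:
  fixes v :: "'n::finite \<Rightarrow> 'a::real_normed_vector"
  assumes "convex X" "\<And>x x'. x \<in> X \<Longrightarrow> x' \<in> X \<Longrightarrow> norm (x - x') \<le> D" "\<And>i. v i \<in> X"
  shows "consensus_err v \<le> sqrt (real CARD('n)) * D"
proof -
  have "0 \<le> D" using assms(2,3) by (metis norm_ge_zero order_trans)
  have "consensus_err v \<le> L2_set (\<lambda>i::'n. D) UNIV"
    unfolding consensus_err_def
    using assms(2,3) avg_in_convex[of X v, OF assms(1,3)] by (intro L2_set_mono) auto
  also have "\<dots> = sqrt (real CARD('n)) * D" using \<open>0 \<le> D\<close> by (simp add: L2_set_constant)
  finally show ?thesis .
qed

lemma consensus_err_convex_comb: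
  fixes u w :: "'n::finite \<Rightarrow> 'a::real_normed_vector"
  assumes "0 \<le> t" "t \<le> 1"
  shows "consensus_err (\<lambda>i. (1 - t) *\<^sub>R u i + t *\<^sub>R w i)
    \<le> (1 - t) * consensus_err u + t * consensus_err w"
proof -
  let ?v = "\<lambda>i. (1 - t) *\<^sub>R u i + t *\<^sub>R w i"
  have "consensus_err ?v
      \<le> L2_set (\<lambda>i. norm ((1 - t) *\<^sub>R (u i - avg u)) + norm (t *\<^sub>R (w i - avg w))) UNIV"
    unfolding consensus_err_def avg_linear
  proof (rule L2_set_mono)
    fix i
    have "?v i - ((1 - t) *\<^sub>R avg u + t *\<^sub>R avg w) = (1 - t) *\<^sub>R (u i - avg u) + t *\<^sub>R (w i - avg w)"
      by (simp add: algebra_simps)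
    then show "norm (?v i - ((1 - t) *\<^sub>R avg u + t *\<^sub>R avg w))
        \<le> norm ((1 - t) *\<^sub>R (u i - avg u)) + norm (t *\<^sub>R (w i - avg w))"
      by (metis norm_triangle_ineq)
  qed simp
  also have "\<dots> \<le> L2_set (\<lambda>i. norm ((1 - t) *\<^sub>R (u i - avg u))) UNIV
      + L2_set (\<lambda>i. norm (t *\<^sub>R (w i - avg w))) UNIV"
    by (rule L2_set_triangle_ineq)
  also have "\<dots> = (1 - t) * consensus_err u + t * consensus_err w"
    using assms by (simp add: consensus_err_def L2_set_right_distrib)
  finally show ?thesis .
qed

lemma consensus_err_mix_le:
  fixes C :: "real^'n::finite^'n" and v :: "'n \<Rightarrow> 'a::real_normed_vector"
  assumes cols: "\<And>j. (\<Sum>i\<in>UNIV. C $ i $ j) = 1"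
    and contraction: "sqrt (\<Sum>i\<in>UNIV. (norm ((\<Sum>j\<in>UNIV. (C $ i $ j) *\<^sub>R v j)
                              - (1 / real CARD('n)) *\<^sub>R (\<Sum>j\<in>UNIV. v j)))\<^sup>2)
      \<le> lam * sqrt (\<Sum>i\<in>UNIV. (norm (v i - (1 / real CARD('n)) *\<^sub>R (\<Sum>j\<in>UNIV. v j)))\<^sup>2)"
    and "lam \<le> \<rho>"
  shows "consensus_err (mix C v) \<le> \<rho> * consensus_err v"
proof -
  have "consensus_err (mix C v) \<le> lam * consensus_err v"
    using contraction avg_mix[of C v, OF cols] by (simp add: consensus_err_def L2_set_def mix_def avg_def)
  also have "\<dots> \<le> \<rho> * consensus_err v"
    using \<open>lam \<le> \<rho>\<close> unfolding consensus_err_def by (intro mult_right_mono L2_set_nonneg)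
  finally show ?thesis .
qed

section \<open>Weighted running averages\<close>

text \<open>For w 0 = 1 the start value 0 is discarded, so moving_avg w b 1 = b 1.\<close>

primrec moving_avg :: "(nat \<Rightarrow> real) \<Rightarrow> (nat \<Rightarrow> real) \<Rightarrow> nat \<Rightarrow> real" where
  "moving_avg w b 0 = 0"
| "moving_avg w b (Suc k) = (1 - w k) * moving_avg w b k + w k * b (Suc k)"

lemma borel_measurable_moving_avg:
  assumes "\<And>k. b (Suc k) \<in> borel_measurable M"
  shows "(\<lambda>\<omega>. moving_avg w (\<lambda>k. b k \<omega>) k) \<in> borel_measurable M"
  by (induction k) (use assms in simp_all)

lemma nn_integral_moving_avg_sq_le:
  assumes w: "\<And>k. 0 \<le> w k" "\<And>k. w k \<le> 1"
    and b: "\<And>k. b (Suc k) \<in> borel_measurable M"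
    and K: "\<And>k. (\<integral>\<^sup>+\<omega>. ennreal ((b (Suc k) \<omega>)\<^sup>2) \<partial>M) \<le> ennreal K" "0 \<le> K"
  shows "(\<integral>\<^sup>+\<omega>. ennreal ((moving_avg w (\<lambda>k. b k \<omega>) k)\<^sup>2) \<partial>M) \<le> ennreal K"
proof (induction k)
  case 0
  then show ?case by simp
next
  case (Suc k)
  let ?A = "\<lambda>\<omega>. moving_avg w (\<lambda>k. b k \<omega>) k"
  have "(\<integral>\<^sup>+\<omega>. ennreal ((moving_avg w (\<lambda>k. b k \<omega>) (Suc k))\<^sup>2) \<partial>M)
      \<le> (\<integral>\<^sup>+\<omega>. ennreal (1 - w k) * ennreal ((?A \<omega>)\<^sup>2)
                 + ennreal (w k) * ennreal ((b (Suc k) \<omega>)\<^sup>2) \<partial>M)"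
  proof (rule nn_integral_mono)
    fix \<omega>
    have "((1 - w k) * ?A \<omega> + w k * b (Suc k) \<omega>)\<^sup>2 \<le> (1 - w k) * (?A \<omega>)\<^sup>2 + w k * (b (Suc k) \<omega>)\<^sup>2"
      using convex_onD[OF convex_power2, of "w k" "?A \<omega>" "b (Suc k) \<omega>"] w by simp
    then have "ennreal ((moving_avg w (\<lambda>k. b k \<omega>) (Suc k))\<^sup>2)
        \<le> ennreal ((1 - w k) * (?A \<omega>)\<^sup>2 + w k * (b (Suc k) \<omega>)\<^sup>2)"
      by (simp add: ennreal_leI)
    then show "ennreal ((moving_avg w (\<lambda>k. b k \<omega>) (Suc k))\<^sup>2)
        \<le> ennreal (1 - w k) * ennreal ((?A \<omega>)\<^sup>2) + ennreal (w k) * ennreal ((b (Suc k) \<omega>)\<^sup>2)"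
      using w by (simp add: ennreal_plus ennreal_mult)
  qed
  also have "\<dots> = ennreal (1 - w k) * (\<integral>\<^sup>+\<omega>. ennreal ((?A \<omega>)\<^sup>2) \<partial>M)
      + ennreal (w k) * (\<integral>\<^sup>+\<omega>. ennreal ((b (Suc k) \<omega>)\<^sup>2) \<partial>M)"
    using b borel_measurable_moving_avg[of b, OF b] by (simp add: nn_integral_add nn_integral_cmult)
  also have "\<dots> \<le> ennreal (1 - w k) * ennreal K + ennreal (w k) * ennreal K"
    using K(1) Suc.IH by (intro add_mono mult_left_mono) auto
  also have "\<dots> = ennreal ((1 - w k) * K + w k * K)"
    using w K(2) by (simp add: ennreal_plus ennreal_mult)
  finally show ?case by (simp add: algebra_simps)
qed

lemma (in prob_space) nn_integral_sq_add_const_le: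
  assumes f: "f \<in> borel_measurable M"
    and K: "(\<integral>\<^sup>+\<omega>. ennreal ((f \<omega>)\<^sup>2) \<partial>M) \<le> ennreal K" "0 \<le> K"
  shows "(\<integral>\<^sup>+\<omega>. ennreal ((f \<omega> + c)\<^sup>2) \<partial>M) \<le> ennreal (2 * K + 2 * c\<^sup>2)"
proof -
  have "(\<integral>\<^sup>+\<omega>. ennreal ((f \<omega> + c)\<^sup>2) \<partial>M) \<le> (\<integral>\<^sup>+\<omega>. 2 * ennreal ((f \<omega>)\<^sup>2) + ennreal (2 * c\<^sup>2) \<partial>M)"
  proof (rule nn_integral_mono)
    fix \<omega>
    have "(f \<omega> + c)\<^sup>2 \<le> 2 * (f \<omega>)\<^sup>2 + 2 * c\<^sup>2"
      using sum_squares_ge_zero[of "f \<omega> - c" 0] by (simp add: power2_eq_square algebra_simps)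
    then have "ennreal ((f \<omega> + c)\<^sup>2) \<le> ennreal (2 * (f \<omega>)\<^sup>2) + ennreal (2 * c\<^sup>2)"
      by (simp add: ennreal_plus[symmetric] del: ennreal_plus)
    then show "ennreal ((f \<omega> + c)\<^sup>2) \<le> 2 * ennreal ((f \<omega>)\<^sup>2) + ennreal (2 * c\<^sup>2)"
      by (simp add: ennreal_mult)
  qed
  also have "\<dots> = 2 * (\<integral>\<^sup>+\<omega>. ennreal ((f \<omega>)\<^sup>2) \<partial>M) + ennreal (2 * c\<^sup>2)"
    using f by (simp add: nn_integral_add nn_integral_cmult emeasure_space_1)
  also have "\<dots> \<le> 2 * ennreal K + ennreal (2 * c\<^sup>2)"
    using K(1) by (intro add_mono mult_left_mono) auto
  also have "\<dots> = ennreal (2 * K + 2 * c\<^sup>2)"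
    using K(2) by (simp add: ennreal_plus ennreal_mult)
  finally show ?thesis .
qed

lemma norm_momentum_update_le:
  fixes y g1 g0 :: "'a::real_normed_vector"
  assumes "0 \<le> \<gamma>" "\<gamma> \<le> 1"
  shows "norm ((1 - \<gamma>) *\<^sub>R y + g1 - (1 - \<gamma>) *\<^sub>R g0)
    \<le> \<gamma> * norm g1 + (1 - \<gamma>) * (norm y + norm (g1 - g0))"
proof -
  have "(1 - \<gamma>) *\<^sub>R y + g1 - (1 - \<gamma>) *\<^sub>R g0 = \<gamma> *\<^sub>R g1 + (1 - \<gamma>) *\<^sub>R (y + (g1 - g0))"
    by (simp add: algebra_simps)
  also have "norm \<dots> \<le> norm (\<gamma> *\<^sub>R g1) + norm ((1 - \<gamma>) *\<^sub>R (y + (g1 - g0)))"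
    by (rule norm_triangle_ineq)
  also have "\<dots> = \<gamma> * norm g1 + (1 - \<gamma>) * norm (y + (g1 - g0))"
    using assms by simp
  also have "\<dots> \<le> \<gamma> * norm g1 + (1 - \<gamma>) * (norm y + norm (g1 - g0))"
    using assms by (intro add_left_mono mult_left_mono norm_triangle_ineq) auto
  finally show ?thesis .
qed

lemma lipschitz_constant_nonneg:
  fixes h :: "'a::euclidean_space \<Rightarrow> 'b::real_normed_vector"
  assumes "\<And>x x'. norm (h x - h x') \<le> L * norm (x - x')"
  shows "0 \<le> L"
proof -
  obtain b :: 'a where b: "b \<in> Basis" using nonempty_Basis by blast
  have "0 \<le> L * norm (b - 0)" using assms[of b 0] by (rule order_trans[OF norm_ge_zero])
  then show ?thesis by (simp add: norm_Basis[OF b])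
qed

lemma exists_sq_ratio_ge:
  assumes "lam < 1"
  shows "\<exists>k::nat. 0 < k \<and> lam \<le> (real k / (real k + 1))\<^sup>2"
proof -
  define k where "k = nat \<lceil>2 / (1 - lam)\<rceil> + 1"
  define t where "t = 1 / (real k + 1)"
  have "2 / (1 - lam) \<le> real k + 1" unfolding k_def by linarith
  then have "2 * t \<le> 1 - lam" using assms unfolding t_def by (simp add: pos_divide_le_eq mult.commute)
  moreover have "real k / (real k + 1) = 1 - t" unfolding t_def by (simp add: field_simps)
  moreover have "1 - 2 * t \<le> (1 - t)\<^sup>2" by (simp add: power2_eq_square algebra_simps)
  ultimately have "lam \<le> (real k / (real k + 1))\<^sup>2" by simp
  moreover have "0 < k" unfolding k_def by simp
  ultimately show ?thesis by blast
qed

lemma least_sq_ratio_ge: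
  assumes "lam < 1"
  defines "k0 \<equiv> LEAST k::nat. 0 < k \<and> lam \<le> (real k / (real k + 1))\<^sup>2"
  shows "0 < k0" and "lam \<le> (real k0 / (real k0 + 1))\<^sup>2"
  using LeastI_ex[OF exists_sq_ratio_ge[OF assms(1)]] unfolding k0_def by auto

lemma sq_ratio_mult_le: "(real k / (real k + 1))\<^sup>2 * (real k + 2) \<le> real k"
proof -
  have "(real k)\<^sup>2 * (real k + 2) \<le> real k * (real k + 1)\<^sup>2"
    by (simp add: power2_eq_square algebra_simps)
  then show ?thesis by (simp add: power_divide pos_divide_le_eq)
qed

lemma fw_weight_drift_ineq:
  fixes c d :: real
  assumes "0 < k" "0 \<le> c" "0 \<le> d"
  shows "(1 - 2 / (real k + 2)) * (c / (real k + 1) + 2 / (real k + 2) * d + c / real k)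
    \<le> 2 / (real k + 2) * (c + d)"
proof -
  have "1 - 2 / (real k + 2) = real k / (real k + 2)" by (simp add: field_simps)
  then have "(1 - 2 / (real k + 2)) * (c / (real k + 1) + 2 / (real k + 2) * d + c / real k)
      = (real k / (real k + 1)) * (c / (real k + 2)) + (real k / (real k + 2)) * (2 * d / (real k + 2))
        + c / (real k + 2)"
    using assms(1) by (simp add: distrib_left) (simp add: algebra_simps)
  also have "\<dots> \<le> 1 * (c / (real k + 2)) + 1 * (2 * d / (real k + 2)) + c / (real k + 2)"
    using assms by (intro add_mono mult_right_mono) auto
  also have "\<dots> = 2 / (real k + 2) * (c + d)"
    by (simp add: add_divide_distrib[symmetric] algebra_simps)
  finally show ?thesis .
qed

lemma dmfw_moment_const_le:
  fixes G L D C1 \<psi> :: real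
  assumes "0 \<le> G" "0 \<le> L" "0 \<le> D" "D \<le> C1" "2 * G + 2 * L * (D + 2 * C1) \<le> \<psi>"
  shows "2 * G\<^sup>2 + 2 * (L * (2 * D + C1))\<^sup>2
    \<le> 4 * L * (D + 2 * C1) * \<psi> + 4 * G * \<psi> + 8 * G\<^sup>2 + 8 * L\<^sup>2 * (D + 2 * C1)\<^sup>2"
proof -
  have "0 \<le> 2 * G + 2 * L * (D + 2 * C1)" using assms by simp
  then have "0 \<le> \<psi>" using assms(5) by linarith
  have "(L * (2 * D + C1))\<^sup>2 \<le> (L * (D + 2 * C1))\<^sup>2"
    using assms by (intro power_mono mult_left_mono) auto
  moreover have "0 \<le> 4 * L * (D + 2 * C1) * \<psi> + 4 * G * \<psi>"
    using assms \<open>0 \<le> \<psi>\<close> by (intro add_nonneg_nonneg mult_nonneg_nonneg) auto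
  moreover have "(L * (D + 2 * C1))\<^sup>2 = L\<^sup>2 * (D + 2 * C1)\<^sup>2"
    by (rule power_mult_distrib)
  ultimately show ?thesis
    using zero_le_power2[of G] zero_le_power2[of "L * (D + 2 * C1)"] by linarith
qed

section \<open>The DMFW recursion\<close>

definition dmfw_x :: "real^'n^'n \<Rightarrow> ('n::finite \<Rightarrow> 'a::euclidean_space \<Rightarrow> 'b \<Rightarrow> 'a)
    \<Rightarrow> (nat \<Rightarrow> 'n \<Rightarrow> 'a \<Rightarrow> 'a) \<Rightarrow> (nat \<Rightarrow> real) \<Rightarrow> (nat \<Rightarrow> real) \<Rightarrow> ('n \<Rightarrow> 'a)
    \<Rightarrow> (nat \<Rightarrow> 'n \<Rightarrow> 'b) \<Rightarrow> nat \<Rightarrow> 'n \<Rightarrow> 'a" where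
  "dmfw_x C g lmo \<gamma> \<eta> x1 \<xi> k = fst (dmfw C g lmo \<gamma> \<eta> x1 \<xi> k)"

lemma dmfw_x_1: "dmfw_x C g lmo \<gamma> \<eta> x1 \<xi> 1 = x1"
  by (simp add: dmfw_x_def Let_def One_nat_def)

lemma dmfw_x_Suc:
  assumes "0 < k"
  obtains p where "dmfw_x C g lmo \<gamma> \<eta> x1 \<xi> (Suc k) =
    (\<lambda>i. mix C (dmfw_x C g lmo \<gamma> \<eta> x1 \<xi> k) i
          + \<eta> k *\<^sub>R (lmo k i (p i) - mix C (dmfw_x C g lmo \<gamma> \<eta> x1 \<xi> k) i))"
proof -
  obtain m where k: "k = Suc m" using assms by (cases k) auto
  show thesis
  proof (cases m)
    case 0
    then show thesis using that unfolding k by (simp add: dmfw_x_def Let_def)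
  next
    case (Suc m')
    obtain xo yo so xk where "dmfw C g lmo \<gamma> \<eta> x1 \<xi> (Suc m') = (xo, yo, so, xk)"
      by (cases "dmfw C g lmo \<gamma> \<eta> x1 \<xi> (Suc m')") auto
    then show thesis using that unfolding k Suc by (simp add: dmfw_x_def Let_def)
  qed
qed

lemma dmfw_y_1: "dmfw_y C g lmo \<gamma> \<eta> x1 \<xi> 1 i = g i (mix C x1 i) (\<xi> 1 i)"
  by (simp add: dmfw_y_def Let_def One_nat_def)

lemma dmfw_y_Suc:
  assumes "0 < k"
  shows "dmfw_y C g lmo \<gamma> \<eta> x1 \<xi> (Suc k) i =
    (1 - \<gamma> (Suc k)) *\<^sub>R dmfw_y C g lmo \<gamma> \<eta> x1 \<xi> k i
    + g i (mix C (dmfw_x C g lmo \<gamma> \<eta> x1 \<xi> (Suc k)) i) (\<xi> (Suc k) i)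
    - (1 - \<gamma> (Suc k)) *\<^sub>R g i (mix C (dmfw_x C g lmo \<gamma> \<eta> x1 \<xi> k) i) (\<xi> (Suc k) i)"
proof -
  obtain m where k: "k = Suc m" using assms by (cases k) auto
  obtain xo yo so xk where "dmfw C g lmo \<gamma> \<eta> x1 \<xi> (Suc m) = (xo, yo, so, xk)"
    by (cases "dmfw C g lmo \<gamma> \<eta> x1 \<xi> (Suc m)") auto
  then show ?thesis unfolding k by (simp add: dmfw_y_def dmfw_x_def Let_def)
qed

section \<open>Bounds along a sample path\<close>

locale dmfw_setting =
  fixes C :: "real^'n::finite^'n" and X :: "'a::euclidean_space set"
    and D \<rho> \<kappa> L :: real
    and g :: "'n \<Rightarrow> 'a \<Rightarrow> 'b \<Rightarrow> 'a" and Q :: "'n \<Rightarrow> 'b measure"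
    and lmo :: "nat \<Rightarrow> 'n \<Rightarrow> 'a \<Rightarrow> 'a" and x1 :: "'n \<Rightarrow> 'a"
  assumes C_nonneg: "\<And>i j. 0 \<le> C $ i $ j"
    and C_rows: "\<And>i. (\<Sum>j\<in>UNIV. C $ i $ j) = 1"
    and C_cols: "\<And>j. (\<Sum>i\<in>UNIV. C $ i $ j) = 1"
    and contraction: "\<And>v :: 'n \<Rightarrow> 'a. consensus_err (mix C v) \<le> \<rho> * consensus_err v"
    and \<rho>_nonneg: "0 \<le> \<rho>" and \<kappa>_nonneg: "0 \<le> \<kappa>" and \<rho>_\<kappa>: "\<rho> * (\<kappa> + 2) \<le> \<kappa>"
    and X_convex: "convex X"
    and X_diam: "\<And>x x'. x \<in> X \<Longrightarrow> x' \<in> X \<Longrightarrow> norm (x - x') \<le> D"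
    and L_nonneg: "0 \<le> L"
    and g_lipschitz: "\<And>i z x x'. z \<in> space (Q i) \<Longrightarrow> norm (g i x z - g i x' z) \<le> L * norm (x - x')"
    and lmo_in: "\<And>k i p. lmo k i p \<in> X"
    and x1_in: "\<And>i. x1 i \<in> X"
begin

abbreviation x_iter :: "(nat \<Rightarrow> 'n \<Rightarrow> 'b) \<Rightarrow> nat \<Rightarrow> 'n \<Rightarrow> 'a" where
  "x_iter \<xi> \<equiv> dmfw_x C g lmo (\<lambda>k. 2 / (real k + 1)) (\<lambda>k. 2 / (real k + 2)) x1 \<xi>"

abbreviation y_iter :: "(nat \<Rightarrow> 'n \<Rightarrow> 'b) \<Rightarrow> nat \<Rightarrow> 'n \<Rightarrow> 'a" where
  "y_iter \<xi> \<equiv> dmfw_y C g lmo (\<lambda>k. 2 / (real k + 1)) (\<lambda>k. 2 / (real k + 2)) x1 \<xi>"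

lemma D_nonneg: "0 \<le> D"
  using X_diam[OF x1_in x1_in] norm_ge_zero order_trans by blast

lemma x_iter_Suc:
  assumes "0 < k"
  obtains \<theta> where "\<And>i. \<theta> i \<in> X"
    and "x_iter \<xi> (Suc k) = (\<lambda>i. (1 - 2 / (real k + 2)) *\<^sub>R mix C (x_iter \<xi> k) i + (2 / (real k + 2)) *\<^sub>R \<theta> i)"
proof -
  obtain p where "x_iter \<xi> (Suc k) =
      (\<lambda>i. mix C (x_iter \<xi> k) i + (2 / (real k + 2)) *\<^sub>R (lmo k i (p i) - mix C (x_iter \<xi> k) i))"
    using dmfw_x_Suc[OF assms] .
  then show thesis using that[of "\<lambda>i. lmo k i (p i)"] lmo_in by (simp add: algebra_simps)
qed

lemma x_iter_in:
  assumes "0 < k"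
  shows "x_iter \<xi> k i \<in> X"
  using assms
proof (induction k arbitrary: i rule: nat_induct_non_zero)
  case 1
  then show ?case unfolding dmfw_x_1 by (rule x1_in)
next
  case (Suc k)
  obtain \<theta> where \<theta>: "\<And>i. \<theta> i \<in> X"
    and step: "x_iter \<xi> (Suc k) = (\<lambda>i. (1 - 2 / (real k + 2)) *\<^sub>R mix C (x_iter \<xi> k) i + (2 / (real k + 2)) *\<^sub>R \<theta> i)"
    using x_iter_Suc[OF Suc.hyps(1)] by blast
  have "mix C (x_iter \<xi> k) i \<in> X"
    using mix_in_convex[OF X_convex C_nonneg C_rows] Suc.IH by blast
  then show ?case unfolding step using \<theta> by (intro convexD[OF X_convex]) auto
qed

lemma mix_x_iter_in: "0 < k \<Longrightarrow> mix C (x_iter \<xi> k) i \<in> X"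
  using mix_in_convex[OF X_convex C_nonneg C_rows] x_iter_in by blast

lemma consensus_err_mix_x_iter_Suc_le:
  assumes "0 < k"
  shows "consensus_err (mix C (x_iter \<xi> (Suc k)))
    \<le> \<rho> * ((1 - 2 / (real k + 2)) * consensus_err (mix C (x_iter \<xi> k))
              + 2 / (real k + 2) * (sqrt (real CARD('n)) * D))"
proof -
  define \<eta> where "\<eta> = 2 / (real k + 2)"
  have \<eta>: "0 \<le> \<eta>" "\<eta> \<le> 1" unfolding \<eta>_def by auto
  obtain \<theta> where \<theta>: "\<And>i. \<theta> i \<in> X"
    and step: "x_iter \<xi> (Suc k) = (\<lambda>i. (1 - \<eta>) *\<^sub>R mix C (x_iter \<xi> k) i + \<eta> *\<^sub>R \<theta> i)"
    using x_iter_Suc[OF assms] unfolding \<eta>_def by blast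
  have "consensus_err (x_iter \<xi> (Suc k))
      \<le> (1 - \<eta>) * consensus_err (mix C (x_iter \<xi> k)) + \<eta> * consensus_err \<theta>"
    unfolding step using \<eta> by (rule consensus_err_convex_comb)
  also have "\<dots> \<le> (1 - \<eta>) * consensus_err (mix C (x_iter \<xi> k)) + \<eta> * (sqrt (real CARD('n)) * D)"
    using consensus_err_le_diameter[OF X_convex X_diam \<theta>] \<eta> by (intro add_left_mono mult_left_mono)
  finally show ?thesis
    unfolding \<eta>_def using contraction[of "x_iter \<xi> (Suc k)"] \<rho>_nonneg by (meson mult_left_mono order_trans)
qed

lemma consensus_err_mix_x_iter:
  assumes "0 < k"
  shows "consensus_err (mix C (x_iter \<xi> k)) \<le> \<kappa> * sqrt (real CARD('n)) * D / real k"
proof -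
  define R where "R = sqrt (real CARD('n)) * D"
  have R_nonneg: "0 \<le> R" unfolding R_def using D_nonneg by simp
  have "consensus_err (mix C (x_iter \<xi> k)) \<le> \<kappa> * R / real k"
    using assms
  proof (induction k rule: nat_induct_non_zero)
    case 1
    have "\<rho> \<le> \<rho> * (\<kappa> + 2)"
      using mult_nonneg_nonneg[OF \<rho>_nonneg \<kappa>_nonneg] \<rho>_nonneg by (simp add: algebra_simps)
    then have "\<rho> \<le> \<kappa>" using \<rho>_\<kappa> by linarith
    have "consensus_err (mix C (x_iter \<xi> 1)) \<le> \<rho> * consensus_err (x_iter \<xi> 1)"
      by (rule contraction)
    also have "\<dots> \<le> \<rho> * R"
      unfolding R_def using consensus_err_le_diameter[OF X_convex X_diam, of "x_iter \<xi> 1"] x_iter_in \<rho>_nonneg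
      by (intro mult_left_mono) auto
    also have "\<dots> \<le> \<kappa> * R"
      using \<open>\<rho> \<le> \<kappa>\<close> R_nonneg by (rule mult_right_mono)
    finally show ?case by simp
  next
    case (Suc k)
    define \<eta> where "\<eta> = 2 / (real k + 2)"
    have "consensus_err (mix C (x_iter \<xi> (Suc k)))
        \<le> \<rho> * ((1 - \<eta>) * consensus_err (mix C (x_iter \<xi> k)) + \<eta> * R)"
      unfolding \<eta>_def R_def by (rule consensus_err_mix_x_iter_Suc_le[OF Suc.hyps(1)])
    also have "\<dots> \<le> \<rho> * ((1 - \<eta>) * (\<kappa> * R / real k) + \<eta> * R)"
      using Suc.IH \<rho>_nonneg by (intro mult_left_mono add_right_mono) (auto simp: \<eta>_def)
    also have "(1 - \<eta>) * (\<kappa> * R / real k) + \<eta> * R = (\<kappa> + 2) * R / (real k + 2)"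
    proof -
      have "(1 - \<eta>) * (\<kappa> * R / real k) = \<kappa> * R / (real k + 2)"
        using Suc.hyps(1) by (simp add: \<eta>_def field_simps)
      then show ?thesis by (simp add: \<eta>_def add_divide_distrib ring_distribs)
    qed
    also have "\<rho> * ((\<kappa> + 2) * R / (real k + 2)) = \<rho> * (\<kappa> + 2) * R / (real k + 2)"
      by simp
    also have "\<dots> \<le> \<kappa> * R / (real k + 2)"
      using \<rho>_\<kappa> R_nonneg by (intro divide_right_mono mult_right_mono) auto
    also have "\<dots> \<le> \<kappa> * R / real (Suc k)"
      using \<kappa>_nonneg R_nonneg by (intro divide_left_mono) auto
    finally show ?case .
  qed
  then show ?thesis unfolding R_def by (simp add: mult.assoc)
qed

lemma norm_mix_x_iter_sub_avg:
  assumes "0 < k"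
  shows "norm (mix C (x_iter \<xi> k) i - avg (x_iter \<xi> k)) \<le> \<kappa> * sqrt (real CARD('n)) * D / real k"
proof -
  have "norm (mix C (x_iter \<xi> k) i - avg (x_iter \<xi> k)) \<le> consensus_err (mix C (x_iter \<xi> k))"
    using norm_le_consensus_err[of "mix C (x_iter \<xi> k)" i] by (simp only: avg_mix[OF C_cols])
  also have "\<dots> \<le> \<kappa> * sqrt (real CARD('n)) * D / real k"
    by (rule consensus_err_mix_x_iter[OF assms])
  finally show ?thesis .
qed

lemma norm_avg_x_iter_Suc_diff_le:
  assumes "0 < k"
  shows "norm (avg (x_iter \<xi> (Suc k)) - avg (x_iter \<xi> k)) \<le> 2 / (real k + 2) * D"
proof -
  define \<eta> where "\<eta> = 2 / (real k + 2)"
  obtain \<theta> where \<theta>: "\<And>i. \<theta> i \<in> X"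
    and step: "x_iter \<xi> (Suc k) = (\<lambda>i. (1 - \<eta>) *\<^sub>R mix C (x_iter \<xi> k) i + \<eta> *\<^sub>R \<theta> i)"
    using x_iter_Suc[OF assms] unfolding \<eta>_def by blast
  have "avg (x_iter \<xi> (Suc k)) - avg (x_iter \<xi> k) = \<eta> *\<^sub>R (avg \<theta> - avg (x_iter \<xi> k))"
    unfolding step avg_linear avg_mix[OF C_cols] by (simp add: algebra_simps)
  moreover have "norm (avg \<theta> - avg (x_iter \<xi> k)) \<le> D"
    using \<theta> x_iter_in[OF assms] by (intro X_diam avg_in_convex[OF X_convex]) auto
  ultimately show ?thesis unfolding \<eta>_def by (simp add: divide_right_mono)
qed

lemma damped_mix_x_iter_drift_le:
  assumes "0 < k"
  shows "(1 - 2 / (real k + 2)) * norm (mix C (x_iter \<xi> (Suc k)) i - mix C (x_iter \<xi> k) i)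
    \<le> 2 / (real k + 2) * (\<kappa> * sqrt (real CARD('n)) * D + D)"
proof -
  let ?C1 = "\<kappa> * sqrt (real CARD('n)) * D"
  define \<eta> where "\<eta> = 2 / (real k + 2)"
  have "mix C (x_iter \<xi> (Suc k)) i - mix C (x_iter \<xi> k) i
      = (mix C (x_iter \<xi> (Suc k)) i - avg (x_iter \<xi> (Suc k))) + (avg (x_iter \<xi> (Suc k)) - avg (x_iter \<xi> k))
        - (mix C (x_iter \<xi> k) i - avg (x_iter \<xi> k))"
    by simp
  then have "norm (mix C (x_iter \<xi> (Suc k)) i - mix C (x_iter \<xi> k) i)
      \<le> norm ((mix C (x_iter \<xi> (Suc k)) i - avg (x_iter \<xi> (Suc k))) + (avg (x_iter \<xi> (Suc k)) - avg (x_iter \<xi> k)))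
        + norm (mix C (x_iter \<xi> k) i - avg (x_iter \<xi> k))"
    by (metis norm_triangle_ineq4)
  also have "\<dots> \<le> norm (mix C (x_iter \<xi> (Suc k)) i - avg (x_iter \<xi> (Suc k)))
      + norm (avg (x_iter \<xi> (Suc k)) - avg (x_iter \<xi> k)) + norm (mix C (x_iter \<xi> k) i - avg (x_iter \<xi> k))"
    by (intro add_right_mono norm_triangle_ineq)
  also have "\<dots> \<le> ?C1 / real (Suc k) + \<eta> * D + ?C1 / real k"
    unfolding \<eta>_def using assms
    by (intro add_mono norm_mix_x_iter_sub_avg norm_avg_x_iter_Suc_diff_le) auto
  finally have d: "norm (mix C (x_iter \<xi> (Suc k)) i - mix C (x_iter \<xi> k) i) \<le> ?C1 / (real k + 1) + \<eta> * D + ?C1 / real k"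
    by (simp add: add.commute)
  have "0 \<le> ?C1" using \<kappa>_nonneg D_nonneg by simp
  have "(1 - \<eta>) * norm (mix C (x_iter \<xi> (Suc k)) i - mix C (x_iter \<xi> k) i)
      \<le> (1 - \<eta>) * (?C1 / (real k + 1) + \<eta> * D + ?C1 / real k)"
    using d by (rule mult_left_mono) (simp add: \<eta>_def)
  also have "\<dots> \<le> \<eta> * (?C1 + D)"
    unfolding \<eta>_def using assms \<open>0 \<le> ?C1\<close> D_nonneg by (rule fw_weight_drift_ineq)
  finally show ?thesis unfolding \<eta>_def .
qed

lemma norm_g_mix_x_iter_le:
  assumes "z \<in> space (Q i)" "0 < k"
  shows "norm (g i (mix C (x_iter \<xi> k) i) z) \<le> norm (g i (x1 i) z) + L * D"
proof -
  have "norm (g i (mix C (x_iter \<xi> k) i) z - g i (x1 i) z) \<le> L * norm (mix C (x_iter \<xi> k) i - x1 i)"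
    using assms(1) by (rule g_lipschitz)
  also have "\<dots> \<le> L * D"
    using X_diam[OF mix_x_iter_in[OF assms(2)] x1_in] L_nonneg by (rule mult_left_mono)
  finally show ?thesis
    using norm_triangle_sub[of "g i (mix C (x_iter \<xi> k) i) z" "g i (x1 i) z"] by linarith
qed

lemma damped_gradient_drift_le:
  assumes "z \<in> space (Q i)" "0 < k"
  shows "(1 - 2 / (real k + 2)) * norm (g i (mix C (x_iter \<xi> (Suc k)) i) z - g i (mix C (x_iter \<xi> k) i) z)
    \<le> 2 / (real k + 2) * (L * (\<kappa> * sqrt (real CARD('n)) * D + D))"
proof -
  let ?d = "norm (mix C (x_iter \<xi> (Suc k)) i - mix C (x_iter \<xi> k) i)"
  have "(1 - 2 / (real k + 2)) * norm (g i (mix C (x_iter \<xi> (Suc k)) i) z - g i (mix C (x_iter \<xi> k) i) z)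
      \<le> (1 - 2 / (real k + 2)) * (L * ?d)"
    using assms(1) by (intro mult_left_mono g_lipschitz) auto
  also have "\<dots> = L * ((1 - 2 / (real k + 2)) * ?d)"
    by (rule mult.left_commute)
  also have "\<dots> \<le> L * (2 / (real k + 2) * (\<kappa> * sqrt (real CARD('n)) * D + D))"
    using damped_mix_x_iter_drift_le[OF assms(2)] L_nonneg by (rule mult_left_mono)
  finally show ?thesis by (simp only: mult.left_commute)
qed

lemma norm_y_iter_le_moving_avg:
  assumes samples: "\<And>k. 0 < k \<Longrightarrow> \<xi> k i \<in> space (Q i)" and "0 < k"
  shows "norm (y_iter \<xi> k i) \<le> moving_avg (\<lambda>k. 2 / (real k + 2))
    (\<lambda>k. norm (g i (x1 i) (\<xi> k i)) + L * (2 * D + \<kappa> * sqrt (real CARD('n)) * D)) k"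
proof -
  let ?C1 = "\<kappa> * sqrt (real CARD('n)) * D"
  have "0 \<le> L * (D + ?C1)" using L_nonneg D_nonneg \<kappa>_nonneg by simp
  show ?thesis
    using assms(2)
  proof (induction k rule: nat_induct_non_zero)
    case 1
    have "norm (y_iter \<xi> 1 i) \<le> norm (g i (x1 i) (\<xi> 1 i)) + L * D"
      using norm_g_mix_x_iter_le[OF samples, of 1 1 \<xi>] unfolding dmfw_y_1 dmfw_x_1 by simp
    then show ?case using \<open>0 \<le> L * (D + ?C1)\<close> by (simp add: algebra_simps)
  next
    case (Suc k)
    define \<eta> where "\<eta> = 2 / (real k + 2)"
    have \<eta>: "0 \<le> \<eta>" "\<eta> \<le> 1" unfolding \<eta>_def by auto
    have \<gamma>: "2 / (real (Suc k) + 1) = \<eta>" unfolding \<eta>_def by (simp add: add.commute)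
    let ?G1 = "g i (mix C (x_iter \<xi> (Suc k)) i) (\<xi> (Suc k) i)"
      and ?G0 = "g i (mix C (x_iter \<xi> k) i) (\<xi> (Suc k) i)"
    have "norm (y_iter \<xi> (Suc k) i) \<le> \<eta> * norm ?G1 + (1 - \<eta>) * (norm (y_iter \<xi> k i) + norm (?G1 - ?G0))"
      unfolding dmfw_y_Suc[OF Suc.hyps(1)] \<gamma> using \<eta> by (rule norm_momentum_update_le)
    also have "\<dots> = \<eta> * norm ?G1 + (1 - \<eta>) * norm (y_iter \<xi> k i) + (1 - \<eta>) * norm (?G1 - ?G0)"
      by (simp add: algebra_simps)
    also have "\<dots> \<le> \<eta> * (norm (g i (x1 i) (\<xi> (Suc k) i)) + L * D)
        + (1 - \<eta>) * moving_avg (\<lambda>k. 2 / (real k + 2))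
            (\<lambda>k. norm (g i (x1 i) (\<xi> k i)) + L * (2 * D + ?C1)) k
        + \<eta> * (L * (?C1 + D))"
      using \<eta> Suc.IH norm_g_mix_x_iter_le[OF samples, of "Suc k" "Suc k" \<xi>]
        damped_gradient_drift_le[OF samples Suc.hyps(1), of "Suc k" \<xi>]
      unfolding \<eta>_def by (intro add_mono mult_left_mono) auto
    finally show ?case by (simp add: \<eta>_def algebra_simps)
  qed
qed

lemma y_iter_second_moment:
  assumes M: "prob_space M"
    and xi_meas: "\<And>k i. 0 < k \<Longrightarrow> xi k i \<in> M \<rightarrow>\<^sub>M Q i"
    and xi_law: "\<And>k i. 0 < k \<Longrightarrow> distr M (Q i) (xi k i) = Q i"
    and g_meas: "\<And>i. g i (x1 i) \<in> borel_measurable (Q i)"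
    and G: "\<And>i. (\<integral>\<^sup>+z. ennreal ((norm (g i (x1 i) z))\<^sup>2) \<partial>Q i) \<le> ennreal (G\<^sup>2)"
    and "0 < k"
  shows "(\<integral>\<^sup>+\<omega>. ennreal ((norm (y_iter (\<lambda>k i. xi k i \<omega>) k i))\<^sup>2) \<partial>M)
    \<le> ennreal (2 * G\<^sup>2 + 2 * (L * (2 * D + \<kappa> * sqrt (real CARD('n)) * D))\<^sup>2)"
proof -
  interpret prob_space M by (rule M)
  define c where "c = L * (2 * D + \<kappa> * sqrt (real CARD('n)) * D)"
  define a where "a k \<omega> = norm (g i (x1 i) (xi k i \<omega>))" for k \<omega>
  have a_meas: "a (Suc k) \<in> borel_measurable M" for k
    unfolding a_def using measurable_compose[OF xi_meas g_meas] by simp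
  have a_sq: "(\<integral>\<^sup>+\<omega>. ennreal ((a (Suc k) \<omega>)\<^sup>2) \<partial>M) \<le> ennreal (G\<^sup>2)" for k
  proof -
    have "(\<integral>\<^sup>+\<omega>. ennreal ((a (Suc k) \<omega>)\<^sup>2) \<partial>M)
        = (\<integral>\<^sup>+z. ennreal ((norm (g i (x1 i) z))\<^sup>2) \<partial>distr M (Q i) (xi (Suc k) i))"
      unfolding a_def using xi_meas g_meas by (subst nn_integral_distr) auto
    then show ?thesis using G xi_law by simp
  qed
  have "(\<integral>\<^sup>+\<omega>. ennreal ((norm (y_iter (\<lambda>k i. xi k i \<omega>) k i))\<^sup>2) \<partial>M)
      \<le> (\<integral>\<^sup>+\<omega>. ennreal ((moving_avg (\<lambda>k. 2 / (real k + 2)) (\<lambda>k. a k \<omega> + c) k)\<^sup>2) \<partial>M)"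
  proof (rule nn_integral_mono)
    fix \<omega> assume "\<omega> \<in> space M"
    then have "norm (y_iter (\<lambda>k i. xi k i \<omega>) k i) \<le> moving_avg (\<lambda>k. 2 / (real k + 2)) (\<lambda>k. a k \<omega> + c) k"
      unfolding a_def c_def using \<open>0 < k\<close> xi_meas
      by (intro norm_y_iter_le_moving_avg) (auto intro: measurable_space)
    then show "ennreal ((norm (y_iter (\<lambda>k i. xi k i \<omega>) k i))\<^sup>2)
        \<le> ennreal ((moving_avg (\<lambda>k. 2 / (real k + 2)) (\<lambda>k. a k \<omega> + c) k)\<^sup>2)"
      by (intro ennreal_leI power_mono) auto
  qed
  also have "\<dots> \<le> ennreal (2 * G\<^sup>2 + 2 * c\<^sup>2)"
    using a_meas nn_integral_sq_add_const_le[OF a_meas a_sq]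
    by (intro nn_integral_moving_avg_sq_le[where b = "\<lambda>k \<omega>. a k \<omega> + c"]) auto
  finally show ?thesis unfolding c_def .
qed

end

theorem lemma9:
  fixes C :: "real^'n::finite^'n"
    and E :: "('n \<times> 'n) set"
    and X :: "'a::euclidean_space set"
    and D L G \<delta> :: real
    and M :: "'c measure"
    and Q :: "'n \<Rightarrow> 'b measure"
    and f :: "'n \<Rightarrow> 'a \<Rightarrow> 'b \<Rightarrow> real"
    and gf :: "'n \<Rightarrow> 'a \<Rightarrow> 'b \<Rightarrow> 'a"
    and xi :: "nat \<Rightarrow> 'n \<Rightarrow> 'c \<Rightarrow> 'b"
    and lmo :: "nat \<Rightarrow> 'n \<Rightarrow> 'a \<Rightarrow> 'a"
    and x1 :: "'n \<Rightarrow> 'a"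
  defines "lam \<equiv> second_eig_mag C"
  defines "k0 \<equiv> (LEAST k::nat. 0 < k \<and> lam \<le> (real k / (real k + 1))^2)"
  defines "C1 \<equiv> real k0 * sqrt (real CARD('n)) * D"
  defines "y \<equiv> (\<lambda>k i \<omega>. dmfw_y C gf lmo (\<lambda>k. 2 / (real k + 1)) (\<lambda>k. 2 / (real k + 2)) x1
                        (\<lambda>k i. xi k i \<omega>) k i)"
  defines "\<psi> \<equiv> max (Max (range (\<lambda>i. \<integral>\<omega>. norm (y 1 i \<omega>) \<partial>M)))
                    (2 * G + 2 * L * (D + 2 * C1))"
  defines "\<psi>h \<equiv> max (Max (range (\<lambda>i. \<integral>\<omega>. (norm (y 1 i \<omega>))^2 \<partial>M)))
                    (4 * L * (D + 2 * C1) * \<psi> + 4 * G * \<psi> + 8 * G^2 + 8 * L^2 * (D + 2 * C1)^2)"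
  \<comment> \<open>communication graph and weight matrix\<close>
  assumes connected: "\<forall>i j. (i, j) \<in> (E \<union> E\<inverse>)\<^sup>*"
    and C_nonneg: "\<forall>i j. C $ i $ j \<ge> 0"
    and C_support: "\<forall>i j. j \<noteq> i \<and> (i, j) \<notin> E \<longrightarrow> C $ i $ j = 0"
    and C_rows: "\<forall>i. (\<Sum>j\<in>UNIV. C $ i $ j) = 1"
    and C_cols: "\<forall>j. (\<Sum>i\<in>UNIV. C $ i $ j) = 1"
    and lam_lt1: "lam < 1"
    and contraction: "\<forall>v :: 'n \<Rightarrow> 'a.
          sqrt (\<Sum>i\<in>UNIV. (norm ((\<Sum>j\<in>UNIV. (C $ i $ j) *\<^sub>R v j)
                                   - (1 / real CARD('n)) *\<^sub>R (\<Sum>j\<in>UNIV. v j)))^2)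
          \<le> lam * sqrt (\<Sum>i\<in>UNIV. (norm (v i - (1 / real CARD('n)) *\<^sub>R (\<Sum>j\<in>UNIV. v j)))^2)"
  \<comment> \<open>constraint set\<close>
    and X_convex: "convex X"
    and X_compact: "compact X"
    and X_diam: "\<forall>x\<in>X. \<forall>x'\<in>X. norm (x - x') \<le> D"
  \<comment> \<open>random variables / sampling: Q i is the law of \<xi>^i\<close>
    and M_prob: "prob_space M"
    and samples_law: "\<forall>k\<ge>1. \<forall>i. distr M (Q i) (xi k i) = Q i"
    and samples_indep: "prob_space.indep_vars M (\<lambda>(k, i). Q i) (\<lambda>(k, i). xi k i) ({1..} \<times> UNIV)"
  \<comment> \<open>smoothness of f_i(\<cdot>,\<xi>)\<close>
    and f_grad: "\<forall>i. \<forall>\<xi>\<in>space (Q i). \<forall>x. ((\<lambda>x. f i x \<xi>) has_derivative (\<lambda>h. gf i x \<xi> \<bullet> h)) (at x)"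
    and f_lip: "\<forall>i. \<forall>\<xi>\<in>space (Q i). \<forall>x x'. norm (gf i x \<xi> - gf i x' \<xi>) \<le> L * norm (x - x')"
    and gf_meas: "\<forall>i x. gf i x \<in> borel_measurable (Q i)"
  \<comment> \<open>F_i = E f_i(\<cdot>,\<xi>^i), with \<nabla>F_i = E \<nabla>f_i L-Lipschitz\<close>
    and F_exists: "\<forall>i x. integrable (Q i) (\<lambda>\<xi>. f i x \<xi>)"
    and F_grad: "\<forall>i x. ((\<lambda>x. \<integral>\<xi>. f i x \<xi> \<partial>Q i) has_derivative
                        (\<lambda>h. (\<integral>\<xi>. gf i x \<xi> \<partial>Q i) \<bullet> h)) (at x)"
    and F_lip: "\<forall>i x x'. norm ((\<integral>\<xi>. gf i x \<xi> \<partial>Q i) - (\<integral>\<xi>. gf i x' \<xi> \<partial>Q i)) \<le> L * norm (x - x')"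
  \<comment> \<open>variance and moment bounds\<close>
    and var_bound: "\<forall>x\<in>X. \<forall>i. (\<integral>\<^sup>+\<xi>. ennreal ((norm ((\<integral>\<zeta>. gf i x \<zeta> \<partial>Q i) - gf i x \<xi>))^2) \<partial>Q i)
                              \<le> ennreal (\<delta>^2)"
    and G_pos: "G > 0"
    and G_sq: "\<forall>x\<in>X. \<forall>i. (\<integral>\<^sup>+\<xi>. ennreal ((norm (gf i x \<xi>))^2) \<partial>Q i) \<le> ennreal (G^2)"
    and G_first: "\<forall>x\<in>X. \<forall>i. (\<integral>\<^sup>+\<xi>. ennreal (norm (gf i x \<xi>)) \<partial>Q i) \<le> ennreal G"
  \<comment> \<open>linear minimisation oracle and initial points\<close>
    and lmo_argmin: "\<forall>k i p. lmo k i p \<in> X \<and> (\<forall>\<phi>\<in>X. p \<bullet> lmo k i p \<le> p \<bullet> \<phi>)"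
    and lmo_meas: "\<forall>k i. lmo k i \<in> borel_measurable borel"
    and x1_in: "\<forall>i. x1 i \<in> X"
  shows "\<forall>i. \<forall>k\<ge>1. (\<integral>\<^sup>+\<omega>. ennreal ((norm (y k i \<omega>))^2) \<partial>M) \<le> ennreal \<psi>h"
proof (intro allI impI)
  fix i and k :: nat
  assume "1 \<le> k"
  interpret prob_space M by (rule M_prob)
  have xi_meas: "xi k i \<in> M \<rightarrow>\<^sub>M Q i" if "0 < k" for k i
    using samples_indep that unfolding indep_vars_def by force
  have L_nonneg: "0 \<le> L"
  proof -
    obtain \<omega> where "\<omega> \<in> space M" using not_empty by blast
    then have "xi 1 i \<omega> \<in> space (Q i)" using xi_meas[of 1] by (auto intro: measurable_space)
    then show ?thesis using f_lip by (intro lipschitz_constant_nonneg[of "\<lambda>x. gf i x (xi 1 i \<omega>)"]) blast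
  qed
  note k0 = least_sq_ratio_ge[OF lam_lt1, folded k0_def]
  define \<rho> where "\<rho> = (real k0 / (real k0 + 1))\<^sup>2"
  have "consensus_err (mix C v) \<le> \<rho> * consensus_err v" for v :: "'n \<Rightarrow> 'a"
    using C_cols contraction k0(2) unfolding \<rho>_def by (intro consensus_err_mix_le) auto
  then have "dmfw_setting C X D \<rho> (real k0) L gf Q lmo x1"
    using C_nonneg C_rows C_cols X_convex X_diam L_nonneg f_lip lmo_argmin x1_in sq_ratio_mult_le[of k0]
    by unfold_locales (auto simp: \<rho>_def)
  then have "(\<integral>\<^sup>+\<omega>. ennreal ((norm (y k i \<omega>))\<^sup>2) \<partial>M) \<le> ennreal (2 * G\<^sup>2 + 2 * (L * (2 * D + C1))\<^sup>2)"
    unfolding y_def C1_def using \<open>1 \<le> k\<close> samples_law G_sq x1_in gf_meas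
    by (intro dmfw_setting.y_iter_second_moment[OF _ M_prob xi_meas]) auto
  also have "\<dots> \<le> ennreal \<psi>h"
  proof (rule ennreal_leI)
    have "0 \<le> D" using X_diam x1_in by (meson norm_ge_zero order_trans)
    have "1 * 1 * D \<le> real k0 * sqrt (real CARD('n)) * D"
      using \<open>0 \<le> D\<close> k0(1) by (intro mult_right_mono mult_mono) auto
    then have "D \<le> C1" unfolding C1_def by simp
    then show "2 * G\<^sup>2 + 2 * (L * (2 * D + C1))\<^sup>2 \<le> \<psi>h"
      unfolding \<psi>h_def using G_pos L_nonneg \<open>0 \<le> D\<close>
      by (intro max.coboundedI2 dmfw_moment_const_le) (auto simp: \<psi>_def)
  qed
  finally show "(\<integral>\<^sup>+\<omega>. ennreal ((norm (y k i \<omega>))\<^sup>2) \<partial>M) \<le> ennreal \<psi>h" .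
qed

end
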